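(* Every formula of $\mathcal{L}(\Rightarrow)$ is provably equivalent in the Yalcin logic to a formula of $\mathcal{L}$; that is, for every $\varphi\in\mathcal{L}(\Rightarrow)$ there is $\varphi'\in\mathcal{L}$ such that $\varphi\leftrightarrow\varphi'$ is a theorem of the Yalcin logic.
   Context: The language $\mathcal{L}(\Rightarrow)$ is given by $\varphi::= p\mid \neg\varphi\mid (\varphi\wedge\varphi)\mid \Box\varphi \mid (\varphi\Rightarrow\varphi)$, with $p$ ranging over a fixed set of propositional variables; $\vee,\to,\leftrightarrow,\bot$ as usual and $\Diamond\varphi:=\neg\Box\neg\varphi$. $\mathcal{L}$ is the set of formulas not containing $\Rightarrow$. A formula is nonmodal if it contains neither $\Rightarrow$ nor $\Box$. The Yalcin logic is the smallest set of formulas of $\mathcal{L}(\Rightarrow)$ closed under replacement of equivalents (if $\alpha\leftrightarrow\beta$ is in the set and $\varphi'$ results from $\varphi$ by replacing an occurrence of $\alpha$ by $\beta$, then $\varphi\leftrightarrow\varphi'$ is in the set), modus ponens for $\to$, and necessitation for $\Box$, and containing all substitution instances of propositional tautologies and all instances of: K: $\Box(\varphi\to\psi)\to(\Box\varphi\to\Box\psi)$; 4: $\Diamond\Diamond\varphi\to\Diamond\varphi$; 5: $\Diamond\Box\varphi\to\Box\varphi$; I1: $(\varphi\Rightarrow\pi)\leftrightarrow\Box(\varphi\to\pi)$ for $\pi$ nonmodal; I2: $(\varphi\Rightarrow(\alpha\wedge\beta))\leftrightarrow((\varphi\Rightarrow\alpha)\wedge(\varphi\Rightarrow\beta))$; I3: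 $(\varphi\Rightarrow\alpha)\to(\varphi\Rightarrow(\alpha\vee\beta))$; I4: $(\varphi\Rightarrow\alpha)\to(\varphi\Rightarrow\Box\alpha)$; I5: $((\varphi\Rightarrow(\alpha\vee\Box\beta))\wedge\neg(\varphi\Rightarrow\beta))\to(\varphi\Rightarrow\alpha)$; I6: $((\varphi\Rightarrow(\alpha\vee\Diamond\beta))\wedge(\varphi\Rightarrow\neg\beta))\to(\varphi\Rightarrow\alpha)$; I7: $\neg(\varphi\Rightarrow\beta)\to(\varphi\Rightarrow\Diamond\neg\beta)$. *)

theory Defs
  imports Main
begin

datatype 'p fm =
    Var 'p
  | Neg "'p fm"
  | Conj "'p fm" "'p fm"
  | Box "'p fm"
  | Cond "'p fm" "'p fm"

definition Disj :: "'p fm \<Rightarrow> 'p fm \<Rightarrow> 'p fm" where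
  "Disj a b = Neg (Conj (Neg a) (Neg b))"
definition Imp :: "'p fm \<Rightarrow> 'p fm \<Rightarrow> 'p fm" where
  "Imp a b = Neg (Conj a (Neg b))"
definition Iff :: "'p fm \<Rightarrow> 'p fm \<Rightarrow> 'p fm" where
  "Iff a b = Conj (Imp a b) (Imp b a)"
definition Dia :: "'p fm \<Rightarrow> 'p fm" where
  "Dia a = Neg (Box (Neg a))"

fun inL :: "'p fm \<Rightarrow> bool" where
  "inL (Var p) = True"
| "inL (Neg a) = inL a"
| "inL (Conj a b) = (inL a \<and> inL b)"
| "inL (Box a) = inL a"
| "inL (Cond a b) = False"

fun nonmodal :: "'p fm \<Rightarrow> bool" where
  "nonmodal (Var p) = True"
| "nonmodal (Neg a) = nonmodal a"
| "nonmodal (Conj a b) = (nonmodal a \<and> nonmodal b)"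
| "nonmodal (Box a) = False"
| "nonmodal (Cond a b) = False"

text \<open>Classical truth-value evaluation (only meaningful on nonmodal formulas).\<close>
fun peval :: "('p \<Rightarrow> bool) \<Rightarrow> 'p fm \<Rightarrow> bool" where
  "peval v (Var p) = v p"
| "peval v (Neg a) = (\<not> peval v a)"
| "peval v (Conj a b) = (peval v a \<and> peval v b)"
| "peval v (Box a) = False"
| "peval v (Cond a b) = False"

fun subst :: "('a \<Rightarrow> 'b fm) \<Rightarrow> 'a fm \<Rightarrow> 'b fm" where
  "subst s (Var p) = s p"
| "subst s (Neg a) = Neg (subst s a)"
| "subst s (Conj a b) = Conj (subst s a) (subst s b)"
| "subst s (Box a) = Box (subst s a)"
| "subst s (Cond a b) = Cond (subst s a) (subst s b)"

text \<open>Substitution instances of propositional tautologies (tautologies over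
  countably many propositional letters, indexed by nat).\<close>
definition taut_inst :: "'p fm \<Rightarrow> bool" where
  "taut_inst \<phi> \<longleftrightarrow> (\<exists>(t :: nat fm) s. nonmodal t \<and> (\<forall>v. peval v t) \<and> \<phi> = subst s t)"

inductive repl1 :: "'p fm \<Rightarrow> 'p fm \<Rightarrow> 'p fm \<Rightarrow> 'p fm \<Rightarrow> bool" for a b where
  here: "repl1 a b a b"
| neg: "repl1 a b x y \<Longrightarrow> repl1 a b (Neg x) (Neg y)"
| conjL: "repl1 a b x y \<Longrightarrow> repl1 a b (Conj x z) (Conj y z)"
| conjR: "repl1 a b x y \<Longrightarrow> repl1 a b (Conj z x) (Conj z y)"
| box: "repl1 a b x y \<Longrightarrow> repl1 a b (Box x) (Box y)"
| condL: "repl1 a b x y \<Longrightarrow> repl1 a b (Cond x z) (Cond y z)"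
| condR: "repl1 a b x y \<Longrightarrow> repl1 a b (Cond z x) (Cond z y)"

inductive_set yalcin :: "'p fm set" where
  Taut: "taut_inst \<phi> \<Longrightarrow> \<phi> \<in> yalcin"
| AxK: "Imp (Box (Imp \<phi> \<psi>)) (Imp (Box \<phi>) (Box \<psi>)) \<in> yalcin"
| Ax4: "Imp (Dia (Dia \<phi>)) (Dia \<phi>) \<in> yalcin"
| Ax5: "Imp (Dia (Box \<phi>)) (Box \<phi>) \<in> yalcin"
| I1: "nonmodal \<pi> \<Longrightarrow> Iff (Cond \<phi> \<pi>) (Box (Imp \<phi> \<pi>)) \<in> yalcin"
| I2: "Iff (Cond \<phi> (Conj \<alpha> \<beta>)) (Conj (Cond \<phi> \<alpha>) (Cond \<phi> \<beta>)) \<in> yalcin"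
| I3: "Imp (Cond \<phi> \<alpha>) (Cond \<phi> (Disj \<alpha> \<beta>)) \<in> yalcin"
| I4: "Imp (Cond \<phi> \<alpha>) (Cond \<phi> (Box \<alpha>)) \<in> yalcin"
| I5: "Imp (Conj (Cond \<phi> (Disj \<alpha> (Box \<beta>))) (Neg (Cond \<phi> \<beta>))) (Cond \<phi> \<alpha>) \<in> yalcin"
| I6: "Imp (Conj (Cond \<phi> (Disj \<alpha> (Dia \<beta>))) (Cond \<phi> (Neg \<beta>))) (Cond \<phi> \<alpha>) \<in> yalcin"
| I7: "Imp (Neg (Cond \<phi> \<beta>)) (Cond \<phi> (Dia (Neg \<beta>))) \<in> yalcin"
| MP: "Imp \<phi> \<psi> \<in> yalcin \<Longrightarrow> \<phi> \<in> yalcin \<Longrightarrow> \<psi> \<in> yalcin"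
| Nec: "\<phi> \<in> yalcin \<Longrightarrow> Box \<phi> \<in> yalcin"
| RE: "Iff \<alpha> \<beta> \<in> yalcin \<Longrightarrow> repl1 \<alpha> \<beta> \<phi> \<phi>' \<Longrightarrow> Iff \<phi> \<phi>' \<in> yalcin"

end

theory Submission
  imports Defs
begin

text \<open>
  A conditional \<open>\<phi> \<Rightarrow> \<psi>\<close> with \<open>\<phi>, \<psi> \<in> L\<close> is eliminated by induction on the number of boxes
  in \<open>\<psi>\<close>. If \<open>\<psi>\<close> is nonmodal, I1 rewrites it to \<open>\<box>(\<phi> \<rightarrow> \<psi>)\<close>. Otherwise pick a boxed atom
  \<open>\<box>\<beta>\<close> of \<open>\<psi>\<close> and split propositionally:
  \<open>\<psi> \<leftrightarrow> (\<psi>[\<top>/\<box>\<beta>] \<or> \<not>\<box>\<beta>) \<and> (\<psi>[\<bottom>/\<box>\<beta>] \<or> \<box>\<beta>)\<close>. By I2 the conditional distributes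
  over the conjunction, and I3--I7 give \<open>(\<phi> \<Rightarrow> \<alpha> \<or> \<box>\<beta>) \<leftrightarrow> (\<phi> \<Rightarrow> \<alpha>) \<or> (\<phi> \<Rightarrow> \<beta>)\<close> and
  \<open>(\<phi> \<Rightarrow> \<alpha> \<or> \<not>\<box>\<beta>) \<leftrightarrow> (\<phi> \<Rightarrow> \<alpha>) \<or> \<not>(\<phi> \<Rightarrow> \<beta>)\<close>; all conditionals left over have consequents
  with fewer boxes. Arbitrary formulas are then handled innermost-first, using replacement
  of equivalents.
\<close>

fun prop_eval :: "('p fm \<Rightarrow> bool) \<Rightarrow> 'p fm \<Rightarrow> bool" where
  "prop_eval V (Neg a) = (\<not> prop_eval V a)"
| "prop_eval V (Conj a b) = (prop_eval V a \<and> prop_eval V b)"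
| "prop_eval V a = V a"

fun prop_atoms :: "'p fm \<Rightarrow> 'p fm set" where
  "prop_atoms (Neg a) = prop_atoms a"
| "prop_atoms (Conj a b) = prop_atoms a \<union> prop_atoms b"
| "prop_atoms a = {a}"

fun prop_skeleton :: "('p fm \<Rightarrow> nat) \<Rightarrow> 'p fm \<Rightarrow> nat fm" where
  "prop_skeleton f (Neg a) = Neg (prop_skeleton f a)"
| "prop_skeleton f (Conj a b) = Conj (prop_skeleton f a) (prop_skeleton f b)"
| "prop_skeleton f a = Var (f a)"

lemma finite_prop_atoms: "finite (prop_atoms a)"
  by (induction a) auto

lemma nonmodal_prop_skeleton: "nonmodal (prop_skeleton f a)"
  by (induction a) auto

lemma peval_prop_skeleton: "peval v (prop_skeleton f a) = prop_eval (v \<circ> f) a"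
  by (induction a) auto

lemma subst_prop_skeleton:
  "prop_atoms a \<subseteq> A \<Longrightarrow> inj_on f A \<Longrightarrow> subst (inv_into A f) (prop_skeleton f a) = a"
  by (induction a) auto

lemma prop_eval_simps [simp]:
  "prop_eval V (Imp a b) = (prop_eval V a \<longrightarrow> prop_eval V b)"
  "prop_eval V (Disj a b) = (prop_eval V a \<or> prop_eval V b)"
  "prop_eval V (Iff a b) = (prop_eval V a \<longleftrightarrow> prop_eval V b)"
  by (auto simp: Imp_def Disj_def Iff_def)

text \<open>Numbering the atoms injectively turns a tautology into a substitution instance of a
  tautology over \<open>nat\<close>.\<close>

lemma yalcin_prop_tautology:
  fixes a :: "'p fm"
  assumes "\<forall>V. prop_eval V a"
  shows "a \<in> yalcin"
proof -
  obtain f :: "'p fm \<Rightarrow> nat" and n where "f ` prop_atoms a = {i. i < n}" "inj_on f (prop_atoms a)"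
    using finite_imp_inj_to_nat_seg[OF finite_prop_atoms] by blast
  then have "taut_inst a"
    unfolding taut_inst_def
    by (intro exI[of _ "prop_skeleton f a"] exI[of _ "inv_into (prop_atoms a) f"])
       (simp add: nonmodal_prop_skeleton peval_prop_skeleton assms subst_prop_skeleton)
  then show ?thesis
    by (rule yalcin.Taut)
qed

lemma yalcin_prop_consequence:
  assumes "set ps \<subseteq> yalcin" and "\<forall>V. (\<forall>x\<in>set ps. prop_eval V x) \<longrightarrow> prop_eval V c"
  shows "c \<in> yalcin"
  using assms
proof (induction ps arbitrary: c)
  case Nil
  then show ?case by (simp add: yalcin_prop_tautology)
next
  case (Cons p ps)
  have "Imp p c \<in> yalcin"
    using Cons by (intro Cons.IH) auto
  then show ?case
    using Cons.prems by (auto intro: yalcin.MP)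
qed

lemma Iff_yalcin_trans:
  "Iff a b \<in> yalcin \<Longrightarrow> Iff b c \<in> yalcin \<Longrightarrow> Iff a c \<in> yalcin"
  by (rule yalcin_prop_consequence[of "[Iff a b, Iff b c]"]) auto

lemma Iff_yalcin_Neg_cong: "Iff a a' \<in> yalcin \<Longrightarrow> Iff (Neg a) (Neg a') \<in> yalcin"
  by (rule yalcin.RE) (auto intro: repl1.intros)

lemma Iff_yalcin_Box_cong: "Iff a a' \<in> yalcin \<Longrightarrow> Iff (Box a) (Box a') \<in> yalcin"
  by (rule yalcin.RE) (auto intro: repl1.intros)

lemma Iff_yalcin_Conj_cong:
  assumes "Iff a a' \<in> yalcin" and "Iff b b' \<in> yalcin"
  shows "Iff (Conj a b) (Conj a' b') \<in> yalcin"
proof (rule Iff_yalcin_trans)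
  show "Iff (Conj a b) (Conj a' b) \<in> yalcin"
    using assms(1) by (rule yalcin.RE) (auto intro: repl1.intros)
  show "Iff (Conj a' b) (Conj a' b') \<in> yalcin"
    using assms(2) by (rule yalcin.RE) (auto intro: repl1.intros)
qed

lemma Iff_yalcin_Cond_right_cong: "Iff b b' \<in> yalcin \<Longrightarrow> Iff (Cond a b) (Cond a b') \<in> yalcin"
  by (rule yalcin.RE) (auto intro: repl1.intros)

lemma Iff_yalcin_Cond_cong:
  assumes "Iff a a' \<in> yalcin" and "Iff b b' \<in> yalcin"
  shows "Iff (Cond a b) (Cond a' b') \<in> yalcin"
proof (rule Iff_yalcin_trans)
  show "Iff (Cond a b) (Cond a' b) \<in> yalcin"
    using assms(1) by (rule yalcin.RE) (auto intro: repl1.intros)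
  show "Iff (Cond a' b) (Cond a' b') \<in> yalcin"
    using assms(2) by (rule Iff_yalcin_Cond_right_cong)
qed

lemma Cond_Disj_Box:
  "Iff (Cond \<phi> (Disj \<alpha> (Box \<beta>))) (Disj (Cond \<phi> \<alpha>) (Cond \<phi> \<beta>)) \<in> yalcin"
proof -
  have comm: "Iff (Cond \<phi> (Disj (Box \<beta>) \<alpha>)) (Cond \<phi> (Disj \<alpha> (Box \<beta>))) \<in> yalcin"
    by (rule Iff_yalcin_Cond_right_cong, rule yalcin_prop_tautology) auto
  show ?thesis
    by (rule yalcin_prop_consequence[of
        "[Imp (Conj (Cond \<phi> (Disj \<alpha> (Box \<beta>))) (Neg (Cond \<phi> \<beta>))) (Cond \<phi> \<alpha>),
          Imp (Cond \<phi> \<alpha>) (Cond \<phi> (Disj \<alpha> (Box \<beta>))),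
          Imp (Cond \<phi> \<beta>) (Cond \<phi> (Box \<beta>)),
          Imp (Cond \<phi> (Box \<beta>)) (Cond \<phi> (Disj (Box \<beta>) \<alpha>)),
          Iff (Cond \<phi> (Disj (Box \<beta>) \<alpha>)) (Cond \<phi> (Disj \<alpha> (Box \<beta>)))]"])
       (use comm in \<open>auto intro: yalcin.intros\<close>)
qed

text \<open>Here I6 and I7 are used with \<open>\<not>\<beta>\<close>, whose diamond \<open>\<diamond>\<not>\<beta>\<close> is \<open>\<not>\<box>\<not>\<not>\<beta>\<close>; the double
  negations are removed by replacement of equivalents.\<close>

lemma Cond_Disj_Neg_Box:
  "Iff (Cond \<phi> (Disj \<alpha> (Neg (Box \<beta>)))) (Disj (Cond \<phi> \<alpha>) (Neg (Cond \<phi> \<beta>))) \<in> yalcin"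
proof -
  have nn: "Iff (Neg (Neg \<beta>)) \<beta> \<in> yalcin"
    by (rule yalcin_prop_tautology) auto
  have dia_right: "Iff (Cond \<phi> (Disj \<alpha> (Dia (Neg \<beta>)))) (Cond \<phi> (Disj \<alpha> (Neg (Box \<beta>)))) \<in> yalcin"
    by (rule yalcin.RE[OF nn]) (auto simp: Disj_def Dia_def intro!: repl1.intros)
  have dia_left: "Iff (Cond \<phi> (Disj (Dia (Neg \<beta>)) \<alpha>)) (Cond \<phi> (Disj (Neg (Box \<beta>)) \<alpha>)) \<in> yalcin"
    by (rule yalcin.RE[OF nn]) (auto simp: Disj_def Dia_def intro!: repl1.intros)
  have nn_cond: "Iff (Cond \<phi> (Neg (Neg \<beta>))) (Cond \<phi> \<beta>) \<in> yalcin"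
    by (rule Iff_yalcin_Cond_right_cong[OF nn])
  have comm: "Iff (Cond \<phi> (Disj (Neg (Box \<beta>)) \<alpha>)) (Cond \<phi> (Disj \<alpha> (Neg (Box \<beta>)))) \<in> yalcin"
    by (rule Iff_yalcin_Cond_right_cong, rule yalcin_prop_tautology) auto
  show ?thesis
    by (rule yalcin_prop_consequence[of
        "[Imp (Conj (Cond \<phi> (Disj \<alpha> (Dia (Neg \<beta>)))) (Cond \<phi> (Neg (Neg \<beta>)))) (Cond \<phi> \<alpha>),
          Imp (Cond \<phi> \<alpha>) (Cond \<phi> (Disj \<alpha> (Neg (Box \<beta>)))),
          Imp (Neg (Cond \<phi> \<beta>)) (Cond \<phi> (Dia (Neg \<beta>))),
          Imp (Cond \<phi> (Dia (Neg \<beta>))) (Cond \<phi> (Disj (Dia (Neg \<beta>)) \<alpha>)),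
          Iff (Cond \<phi> (Disj \<alpha> (Dia (Neg \<beta>)))) (Cond \<phi> (Disj \<alpha> (Neg (Box \<beta>)))),
          Iff (Cond \<phi> (Neg (Neg \<beta>))) (Cond \<phi> \<beta>),
          Iff (Cond \<phi> (Disj (Dia (Neg \<beta>)) \<alpha>)) (Cond \<phi> (Disj (Neg (Box \<beta>)) \<alpha>)),
          Iff (Cond \<phi> (Disj (Neg (Box \<beta>)) \<alpha>)) (Cond \<phi> (Disj \<alpha> (Neg (Box \<beta>))))]"])
       (use dia_right dia_left nn_cond comm in \<open>auto intro: yalcin.intros\<close>)
qed

fun box_count :: "'p fm \<Rightarrow> nat" where
  "box_count (Var p) = 0"
| "box_count (Neg a) = box_count a"
| "box_count (Conj a b) = box_count a + box_count b"
| "box_count (Box a) = Suc (box_count a)"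
| "box_count (Cond a b) = box_count a + box_count b"

fun replace_atom :: "'p fm \<Rightarrow> 'p fm \<Rightarrow> 'p fm \<Rightarrow> 'p fm" where
  "replace_atom A X (Neg a) = Neg (replace_atom A X a)"
| "replace_atom A X (Conj a b) = Conj (replace_atom A X a) (replace_atom A X b)"
| "replace_atom A X a = (if a = A then X else a)"

definition falsum :: "'p fm" where
  "falsum = Conj (Var undefined) (Neg (Var undefined))"

definition verum :: "'p fm" where
  "verum = Neg falsum"

lemma falsum_simps [simp]: "\<not> prop_eval V falsum" "inL falsum" "box_count falsum = 0"
  by (auto simp: falsum_def)

lemma verum_simps [simp]: "prop_eval V verum" "inL verum" "box_count verum = 0"
  by (auto simp: verum_def)

lemma inL_replace_atom: "inL \<psi> \<Longrightarrow> inL X \<Longrightarrow> inL (replace_atom A X \<psi>)"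
  by (induction \<psi>) auto

lemma box_count_replace_atom_le: "box_count X = 0 \<Longrightarrow> box_count (replace_atom A X \<psi>) \<le> box_count \<psi>"
  by (induction \<psi>) auto

lemma box_count_replace_Box_atom_less:
  "box_count X = 0 \<Longrightarrow> Box \<beta> \<in> prop_atoms \<psi> \<Longrightarrow> box_count (replace_atom (Box \<beta>) X \<psi>) < box_count \<psi>"
proof (induction \<psi>)
  case (Conj a b)
  then show ?case
    using box_count_replace_atom_le[of X "Box \<beta>" a] box_count_replace_atom_le[of X "Box \<beta>" b]
    by fastforce
qed auto

lemma prop_eval_replace_atom:
  "V A = prop_eval V X \<Longrightarrow> prop_eval V (replace_atom A X \<psi>) = prop_eval V \<psi>"
  by (induction \<psi>) auto

lemma box_count_prop_atom_le: "a \<in> prop_atoms \<psi> \<Longrightarrow> box_count a \<le> box_count \<psi>"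
  by (induction \<psi>) auto

lemma inL_prop_atom: "a \<in> prop_atoms \<psi> \<Longrightarrow> inL \<psi> \<Longrightarrow> inL a"
  by (induction \<psi>) auto

lemma Box_prop_atom_if_modal: "inL \<psi> \<Longrightarrow> \<not> nonmodal \<psi> \<Longrightarrow> \<exists>\<beta>. Box \<beta> \<in> prop_atoms \<psi>"
  by (induction \<psi>) auto

lemma Cond_split_Box:
  fixes \<phi> \<psi> \<beta> :: "'p fm"
  defines "\<psi>\<^sub>1 \<equiv> replace_atom (Box \<beta>) verum \<psi>" and "\<psi>\<^sub>0 \<equiv> replace_atom (Box \<beta>) falsum \<psi>"
  shows "Iff (Cond \<phi> \<psi>)
           (Conj (Disj (Cond \<phi> \<psi>\<^sub>1) (Neg (Cond \<phi> \<beta>))) (Disj (Cond \<phi> \<psi>\<^sub>0) (Cond \<phi> \<beta>))) \<in> yalcin"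
proof -
  have split: "Iff \<psi> (Conj (Disj \<psi>\<^sub>1 (Neg (Box \<beta>))) (Disj \<psi>\<^sub>0 (Box \<beta>))) \<in> yalcin"
  proof (rule yalcin_prop_tautology, intro allI)
    fix V :: "'p fm \<Rightarrow> bool"
    show "prop_eval V (Iff \<psi> (Conj (Disj \<psi>\<^sub>1 (Neg (Box \<beta>))) (Disj \<psi>\<^sub>0 (Box \<beta>))))"
      using prop_eval_replace_atom[of V "Box \<beta>" verum \<psi>] prop_eval_replace_atom[of V "Box \<beta>" falsum \<psi>]
      unfolding \<psi>\<^sub>1_def \<psi>\<^sub>0_def by (cases "V (Box \<beta>)") auto
  qed
  show ?thesis
    by (rule yalcin_prop_consequence[of
        "[Iff (Cond \<phi> \<psi>) (Cond \<phi> (Conj (Disj \<psi>\<^sub>1 (Neg (Box \<beta>))) (Disj \<psi>\<^sub>0 (Box \<beta>)))),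
          Iff (Cond \<phi> (Conj (Disj \<psi>\<^sub>1 (Neg (Box \<beta>))) (Disj \<psi>\<^sub>0 (Box \<beta>))))
              (Conj (Cond \<phi> (Disj \<psi>\<^sub>1 (Neg (Box \<beta>)))) (Cond \<phi> (Disj \<psi>\<^sub>0 (Box \<beta>)))),
          Iff (Cond \<phi> (Disj \<psi>\<^sub>1 (Neg (Box \<beta>)))) (Disj (Cond \<phi> \<psi>\<^sub>1) (Neg (Cond \<phi> \<beta>))),
          Iff (Cond \<phi> (Disj \<psi>\<^sub>0 (Box \<beta>))) (Disj (Cond \<phi> \<psi>\<^sub>0) (Cond \<phi> \<beta>))]"])
       (use Iff_yalcin_Cond_right_cong[OF split] yalcin.I2 Cond_Disj_Box Cond_Disj_Neg_Box in auto)
qed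

lemma Cond_inL_equiv_inL:
  assumes "inL \<phi>" and "inL \<psi>"
  shows "\<exists>\<chi>. inL \<chi> \<and> Iff (Cond \<phi> \<psi>) \<chi> \<in> yalcin"
  using assms(2)
proof (induction "box_count \<psi>" arbitrary: \<psi> rule: less_induct)
  case less
  show ?case
  proof (cases "nonmodal \<psi>")
    case True
    then show ?thesis
      using assms(1) less.prems
      by (intro exI[of _ "Box (Imp \<phi> \<psi>)"] conjI yalcin.I1) (auto simp: Imp_def)
  next
    case False
    then obtain \<beta> where \<beta>: "Box \<beta> \<in> prop_atoms \<psi>"
      using Box_prop_atom_if_modal less.prems by blast
    let ?\<psi>\<^sub>1 = "replace_atom (Box \<beta>) verum \<psi>" and ?\<psi>\<^sub>0 = "replace_atom (Box \<beta>) falsum \<psi>"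
    have "box_count \<beta> < box_count \<psi>" and "inL \<beta>"
      using box_count_prop_atom_le[OF \<beta>] inL_prop_atom[OF \<beta> less.prems] by auto
    then obtain \<chi> where \<chi>: "inL \<chi>" "Iff (Cond \<phi> \<beta>) \<chi> \<in> yalcin"
      using less.hyps by blast
    obtain \<chi>\<^sub>1 where \<chi>\<^sub>1: "inL \<chi>\<^sub>1" "Iff (Cond \<phi> ?\<psi>\<^sub>1) \<chi>\<^sub>1 \<in> yalcin"
      using less.hyps[of ?\<psi>\<^sub>1] box_count_replace_Box_atom_less[OF _ \<beta>] inL_replace_atom less.prems
      by fastforce
    obtain \<chi>\<^sub>0 where \<chi>\<^sub>0: "inL \<chi>\<^sub>0" "Iff (Cond \<phi> ?\<psi>\<^sub>0) \<chi>\<^sub>0 \<in> yalcin"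
      using less.hyps[of ?\<psi>\<^sub>0] box_count_replace_Box_atom_less[OF _ \<beta>] inL_replace_atom less.prems
      by fastforce
    have "Iff (Cond \<phi> \<psi>) (Conj (Disj \<chi>\<^sub>1 (Neg \<chi>)) (Disj \<chi>\<^sub>0 \<chi>)) \<in> yalcin"
      by (rule yalcin_prop_consequence[of "[Iff (Cond \<phi> \<psi>)
            (Conj (Disj (Cond \<phi> ?\<psi>\<^sub>1) (Neg (Cond \<phi> \<beta>))) (Disj (Cond \<phi> ?\<psi>\<^sub>0) (Cond \<phi> \<beta>))),
            Iff (Cond \<phi> \<beta>) \<chi>, Iff (Cond \<phi> ?\<psi>\<^sub>1) \<chi>\<^sub>1, Iff (Cond \<phi> ?\<psi>\<^sub>0) \<chi>\<^sub>0]"])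
         (use Cond_split_Box \<chi> \<chi>\<^sub>1 \<chi>\<^sub>0 in auto)
    moreover have "inL (Conj (Disj \<chi>\<^sub>1 (Neg \<chi>)) (Disj \<chi>\<^sub>0 \<chi>))"
      using \<chi> \<chi>\<^sub>1 \<chi>\<^sub>0 by (simp add: Disj_def)
    ultimately show ?thesis
      by blast
  qed
qed

theorem lemma6:
  fixes \<phi> :: "'p fm"
  shows "\<exists>\<phi>'. inL \<phi>' \<and> Iff \<phi> \<phi>' \<in> yalcin"
proof (induction \<phi>)
  case (Var x)
  show ?case
    by (intro exI[of _ "Var x"]) (auto intro: yalcin_prop_tautology)
next
  case (Neg a)
  then show ?case
    by (metis Iff_yalcin_Neg_cong inL.simps(2))
next
  case (Box a)
  then show ?case
    by (metis Iff_yalcin_Box_cong inL.simps(4))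
next
  case (Conj a b)
  then show ?case
    by (metis Iff_yalcin_Conj_cong inL.simps(3))
next
  case (Cond a b)
  then obtain a' b' where "inL a'" "Iff a a' \<in> yalcin" "inL b'" "Iff b b' \<in> yalcin"
    by blast
  moreover obtain c where "inL c" "Iff (Cond a' b') c \<in> yalcin"
    using Cond_inL_equiv_inL \<open>inL a'\<close> \<open>inL b'\<close> by blast
  ultimately show ?case
    by (meson Iff_yalcin_Cond_cong Iff_yalcin_trans)
qed

end
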